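(* Let $X$ be a Banach space isomorphic to a Hilbert space and let $A$ be the generator of a uniformly exponentially stable $C_0$-semigroup $\mathbf T=\{T(t)\}_{t\ge0}$ on $X$. Then the following are equivalent: (1) $\mathbf T$ is left-invertible; (2) every element of $L_A$ is strongly positive.
   Context: $X^{*}$ denotes the space of all bounded antilinear functionals on $X$, and $\langle f,x\rangle$ the duality pairing of $f\in X^{*}$ with $x\in X$. $B(X,X^{*})$ is the space of bounded linear operators $X\to X^{*}$. $Q\in B(X,X^{*})$ is positive if $\langle Qx,x\rangle\ge0$ for all $x$, and strongly positive if there is $\theta>0$ with $\langle Qx,x\rangle\ge\theta\|x\|^{2}$ for all $x\in X$; $B^{+}(X,X^{*})$ is the set of positive operators. $L_A$ is the set of all $Q\in B^{+}(X,X^{*})$ with $\langle QAx,x\rangle+\langle Qx,Ax\rangle\le -\|x\|^{2}$ for all $x\in D(A)$. The semigroup $\mathbf T$ is left-invertible if there is a function $t\mapsto m(t)>0$ such that $\|T(t)x\|\ge m(t)\|x\|$ for all $x\in X$ and all $t\ge0$. Uniform exponential stability means $\|T(t)\|\le Me^{-\varepsilon t}$ for some $M\ge1,\varepsilon>0$ and all $t\ge0$. *)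

theory Defs
  imports "HOL-Analysis.Analysis"
begin

text \<open>A complex Banach space is modelled as a real Banach space (type class banach)
  together with a complex scalar multiplication cs extending the real one.\<close>

definition complex_structure :: "(complex \<Rightarrow> 'a::real_normed_vector \<Rightarrow> 'a) \<Rightarrow> bool" where
  "complex_structure cs \<longleftrightarrow>
     (\<forall>r x. cs (complex_of_real r) x = r *\<^sub>R x) \<and>
     (\<forall>a b x. cs a (cs b x) = cs (a * b) x) \<and>
     (\<forall>a x y. cs a (x + y) = cs a x + cs a y) \<and>
     (\<forall>a b x. cs (a + b) x = cs a x + cs b x) \<and>
     (\<forall>a x. norm (cs a x) = cmod a * norm x)"

text \<open>X is isomorphic to a Hilbert space: there is an inner product (linear in the first,
  antilinear in the second argument, Hermitian) whose norm is equivalent to the given norm.\<close>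
definition hilbertian :: "(complex \<Rightarrow> 'a::real_normed_vector \<Rightarrow> 'a) \<Rightarrow> bool" where
  "hilbertian cs \<longleftrightarrow> (\<exists>ip :: 'a \<Rightarrow> 'a \<Rightarrow> complex.
     (\<forall>x y z. ip (x + y) z = ip x z + ip y z) \<and>
     (\<forall>c x z. ip (cs c x) z = c * ip x z) \<and>
     (\<forall>x y. ip y x = cnj (ip x y)) \<and>
     (\<exists>c C. c > 0 \<and> (\<forall>x. Im (ip x x) = 0 \<and> c * (norm x)\<^sup>2 \<le> Re (ip x x)
                                 \<and> Re (ip x x) \<le> C * (norm x)\<^sup>2)))"

definition bounded_clinear_op :: "(complex \<Rightarrow> 'a::real_normed_vector \<Rightarrow> 'a) \<Rightarrow> ('a \<Rightarrow> 'a) \<Rightarrow> bool" where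
  "bounded_clinear_op cs L \<longleftrightarrow>
     (\<forall>x y. L (x + y) = L x + L y) \<and> (\<forall>c x. L (cs c x) = cs c (L x)) \<and>
     (\<exists>K. \<forall>x. norm (L x) \<le> K * norm x)"

text \<open>Bounded antilinear functionals, i.e. elements of X*.\<close>
definition bounded_antilinear_functional ::
    "(complex \<Rightarrow> 'a::real_normed_vector \<Rightarrow> 'a) \<Rightarrow> ('a \<Rightarrow> complex) \<Rightarrow> bool" where
  "bounded_antilinear_functional cs f \<longleftrightarrow>
     (\<forall>x y. f (x + y) = f x + f y) \<and> (\<forall>c x. f (cs c x) = cnj c * f x) \<and>
     (\<exists>K. \<forall>x. cmod (f x) \<le> K * norm x)"

text \<open>Q \<in> B(X,X*): Q x is the functional with \<langle>Qx,y\<rangle> = Q x y.\<close>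
definition bounded_op_dual :: "(complex \<Rightarrow> 'a::real_normed_vector \<Rightarrow> 'a) \<Rightarrow> ('a \<Rightarrow> 'a \<Rightarrow> complex) \<Rightarrow> bool" where
  "bounded_op_dual cs Q \<longleftrightarrow>
     (\<forall>x. bounded_antilinear_functional cs (Q x)) \<and>
     (\<forall>x y. Q (x + y) = (\<lambda>z. Q x z + Q y z)) \<and>
     (\<forall>c x. Q (cs c x) = (\<lambda>z. c * Q x z)) \<and>
     (\<exists>M. \<forall>x z. cmod (Q x z) \<le> M * norm x * norm z)"

definition positive_op :: "(complex \<Rightarrow> 'a::real_normed_vector \<Rightarrow> 'a) \<Rightarrow> ('a \<Rightarrow> 'a \<Rightarrow> complex) \<Rightarrow> bool" where
  "positive_op cs Q \<longleftrightarrow> bounded_op_dual cs Q \<and> (\<forall>x. Im (Q x x) = 0 \<and> Re (Q x x) \<ge> 0)"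

definition strongly_positive :: "('a::real_normed_vector \<Rightarrow> 'a \<Rightarrow> complex) \<Rightarrow> bool" where
  "strongly_positive Q \<longleftrightarrow> (\<exists>\<theta>>0. \<forall>x. Im (Q x x) = 0 \<and> Re (Q x x) \<ge> \<theta> * (norm x)\<^sup>2)"

definition C0_semigroup :: "(complex \<Rightarrow> 'a::real_normed_vector \<Rightarrow> 'a) \<Rightarrow> (real \<Rightarrow> 'a \<Rightarrow> 'a) \<Rightarrow> bool" where
  "C0_semigroup cs T \<longleftrightarrow>
     (\<forall>t\<ge>0. bounded_clinear_op cs (T t)) \<and> T 0 = id \<and>
     (\<forall>t s. t \<ge> 0 \<longrightarrow> s \<ge> 0 \<longrightarrow> T (t + s) = T t \<circ> T s) \<and>
     (\<forall>x. ((\<lambda>t. T t x) \<longlongrightarrow> x) (at_right 0))"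

definition generator :: "(real \<Rightarrow> 'a::real_normed_vector \<Rightarrow> 'a) \<Rightarrow> 'a set \<Rightarrow> ('a \<Rightarrow> 'a) \<Rightarrow> bool" where
  "generator T D A \<longleftrightarrow>
     D = {x. \<exists>y. ((\<lambda>h. (1 / h) *\<^sub>R (T h x - x)) \<longlongrightarrow> y) (at_right 0)} \<and>
     (\<forall>x\<in>D. ((\<lambda>h. (1 / h) *\<^sub>R (T h x - x)) \<longlongrightarrow> A x) (at_right 0))"

definition unif_exp_stable :: "(real \<Rightarrow> 'a::real_normed_vector \<Rightarrow> 'a) \<Rightarrow> bool" where
  "unif_exp_stable T \<longleftrightarrow> (\<exists>M \<epsilon>. M \<ge> 1 \<and> \<epsilon> > 0 \<and> (\<forall>t\<ge>0. onorm (T t) \<le> M * exp (- \<epsilon> * t)))"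

definition left_invertible_sg :: "(real \<Rightarrow> 'a::real_normed_vector \<Rightarrow> 'a) \<Rightarrow> bool" where
  "left_invertible_sg T \<longleftrightarrow> (\<exists>m :: real \<Rightarrow> real. (\<forall>t\<ge>0. m t > 0) \<and>
     (\<forall>t\<ge>0. \<forall>x. norm (T t x) \<ge> m t * norm x))"

definition L_set :: "(complex \<Rightarrow> 'a::real_normed_vector \<Rightarrow> 'a) \<Rightarrow> 'a set \<Rightarrow> ('a \<Rightarrow> 'a)
    \<Rightarrow> ('a \<Rightarrow> 'a \<Rightarrow> complex) set" where
  "L_set cs D A = {Q. positive_op cs Q \<and>
     (\<forall>x\<in>D. Im (Q (A x) x + Q x (A x)) = 0 \<and> Re (Q (A x) x + Q x (A x)) \<le> - (norm x)\<^sup>2)}"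

end

theory Submission
  imports Defs
begin

text \<open>
  (1) \<Longrightarrow> (2): from \<open>\<parallel>T(1)x\<parallel> \<ge> m(1)\<parallel>x\<parallel>\<close> and \<open>T(1) = T(1-t)T(t)\<close> one gets
  \<open>\<parallel>T(t)x\<parallel> \<ge> (m(1)/M)\<parallel>x\<parallel>\<close> for \<open>0 \<le> t \<le> 1\<close>. For \<open>Q \<in> L\<^sub>A\<close> and \<open>x \<in> D(A)\<close> the function
  \<open>t \<mapsto> \<langle>QT(t)x,T(t)x\<rangle>\<close> has right derivative at most \<open>-\<parallel>T(t)x\<parallel>\<^sup>2 \<le> -(m(1)/M)\<^sup>2\<parallel>x\<parallel>\<^sup>2\<close>, so
  comparing \<open>t = 0\<close> with \<open>t = 1\<close> and using \<open>Q \<ge> 0\<close> gives \<open>\<langle>Qx,x\<rangle> \<ge> (m(1)/M)\<^sup>2\<parallel>x\<parallel>\<^sup>2\<close>;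
  this extends from the dense set \<open>D(A)\<close> to all of \<open>X\<close>.

  (2) \<Longrightarrow> (1): for an equivalent inner product \<open>(\<cdot>,\<cdot>)\<close>, the Lyapunov operator
  \<open>\<langle>Px,z\<rangle> = \<integral>\<^sub>0\<^sup>\<infinity> (T(s)x,T(s)z) ds\<close> converges by exponential stability and satisfies
  \<open>\<langle>PAx,x\<rangle> + \<langle>Px,Ax\<rangle> = -(x,x)\<close>, so a multiple of \<open>P\<close> lies in \<open>L\<^sub>A\<close> and \<open>P\<close> is strongly
  positive. Along any orbit, \<open>h(r) = \<langle>PT(r)x,T(r)x\<rangle>\<close> has right derivative
  \<open>-(T(r)x,T(r)x) \<ge> -l h(r)\<close> for a constant \<open>l\<close>, hence \<open>h(0) \<le> e\<^sup>l\<^sup>R h(R)\<close>, which bounds \<open>\<parallel>x\<parallel>\<close> by a multiple of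
  \<open>\<parallel>T(R)x\<parallel>\<close>.
\<close>

section \<open>Right difference quotients\<close>

lemma has_vector_derivative_right_quotient:
  fixes F :: "real \<Rightarrow> 'b::real_normed_vector"
  assumes "(F has_vector_derivative L) (at t within S)" "{t..b} \<subseteq> S" "t < b"
  shows "((\<lambda>k. (1/k) *\<^sub>R (F (t+k) - F t)) \<longlongrightarrow> L) (at_right 0)"
proof -
  have "((\<lambda>y. (1/norm (y - t)) *\<^sub>R (F y - (F t + (y - t) *\<^sub>R L))) \<longlongrightarrow> 0) (at t within S)"
    using assms(1) unfolding has_vector_derivative_def has_derivative_within by blast
  then have "((\<lambda>y. (1/norm (y - t)) *\<^sub>R (F y - (F t + (y - t) *\<^sub>R L))) \<longlongrightarrow> 0) (at t within {t..b})"
    using assms(2) by (rule tendsto_within_subset)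
  then have "((\<lambda>y. (1/norm (y - t)) *\<^sub>R (F y - (F t + (y - t) *\<^sub>R L))) \<longlongrightarrow> 0) (at_right t)"
    using at_within_Icc_at_right[OF assms(3)] by simp
  then have "((\<lambda>k. (1/norm k) *\<^sub>R (F (k+t) - (F t + k *\<^sub>R L)) + L) \<longlongrightarrow> 0 + L) (at_right 0)"
    unfolding filterlim_at_right_to_0[of _ _ t] by (intro tendsto_add) auto
  moreover have "eventually (\<lambda>k. (1/norm k) *\<^sub>R (F (k+t) - (F t + k *\<^sub>R L)) + L
      = (1/k) *\<^sub>R (F (t+k) - F t)) (at_right 0)"
    by (rule eventually_mono[OF eventually_at_right_less])
      (simp add: algebra_simps scaleR_diff_right add.commute)
  ultimately show ?thesis by (simp add: tendsto_cong)
qed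

lemma integral_right_quotient:
  fixes f :: "real \<Rightarrow> 'b::banach"
  assumes "continuous_on {0..} f" "t \<ge> 0"
  shows "((\<lambda>k. (1/k) *\<^sub>R (integral {0..t+k} f - integral {0..t} f)) \<longlongrightarrow> f t) (at_right 0)"
proof -
  have "continuous_on {0..t+1} f" using assms(1) by (rule continuous_on_subset) auto
  then have "((\<lambda>u. integral {0..u} f) has_vector_derivative f t) (at t within {0..t+1})"
    using assms(2) by (intro integral_has_vector_derivative) auto
  from has_vector_derivative_right_quotient[OF this, of "t+1"] show ?thesis
    using assms(2) by auto
qed

lemma exp_right_quotient:
  fixes l r :: real
  shows "((\<lambda>k. (exp (l * (r + k)) - exp (l * r)) / k) \<longlongrightarrow> l * exp (l * r)) (at_right 0)"
proof -
  have "((\<lambda>s. exp (l * s)) has_vector_derivative exp (l * r) * l) (at r)"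
    by (auto intro!: derivative_eq_intros simp flip: has_real_derivative_iff_has_vector_derivative)
  from has_vector_derivative_right_quotient[OF this, of "r+1"] show ?thesis
    by (simp add: mult.commute divide_inverse)
qed

lemma le_add_if_right_derivative_less:
  fixes g :: "real \<Rightarrow> real"
  assumes "a \<le> b" and cont: "continuous_on {a..b} g"
    and der: "\<And>t. a \<le> t \<Longrightarrow> t < b \<Longrightarrow> \<exists>L<e. ((\<lambda>h. (g (t+h) - g t)/h) \<longlongrightarrow> L) (at_right 0)"
  shows "g b \<le> g a + e * (b - a)"
proof -
  define S where "S = {a..b} \<inter> (\<lambda>t. g t - e*(t-a)) -` {..g a}"
  have "continuous_on {a..b} (\<lambda>t. g t - e*(t-a))"
    by (intro continuous_intros cont)
  then have "closed S" unfolding S_def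
    by (intro continuous_closed_preimage) auto
  moreover have "a \<in> S" using \<open>a \<le> b\<close> by (auto simp: S_def)
  moreover have bdd: "bdd_above S" by (auto simp: S_def bdd_above_def)
  ultimately have "Sup S \<in> S" by (intro closed_contains_Sup) auto
  then have s: "a \<le> Sup S" "Sup S \<le> b" and gs: "g (Sup S) \<le> g a + e * (Sup S - a)"
    by (auto simp: S_def)
  have "Sup S = b"
  proof (rule ccontr)
    assume "Sup S \<noteq> b"
    with s have sb: "Sup S < b" by auto
    then obtain L where "L < e" "((\<lambda>h. (g (Sup S + h) - g (Sup S))/h) \<longlongrightarrow> L) (at_right 0)"
      using der s(1) by blast
    then have "eventually (\<lambda>h. (g (Sup S + h) - g (Sup S))/h < e \<and> h \<in> {0<..<b - Sup S}) (at_right 0)"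
      using order_tendstoD(2) sb by (intro eventually_conj eventually_at_right_real) auto
    then obtain h where h: "(g (Sup S + h) - g (Sup S))/h < e" "0 < h" "h < b - Sup S"
      using eventually_happens'[OF trivial_limit_at_right_real] by force
    then have "g (Sup S + h) - g (Sup S) < e * h" by (simp add: divide_less_eq)
    with gs h s have "Sup S + h \<in> S" by (auto simp: S_def algebra_simps)
    then have "Sup S + h \<le> Sup S" using bdd by (rule cSup_upper)
    with h show False by auto
  qed
  with gs show ?thesis by simp
qed

lemma le_if_right_derivative_nonpos:
  fixes g :: "real \<Rightarrow> real"
  assumes "a \<le> b" and "continuous_on {a..b} g"
    and der: "\<And>t. a \<le> t \<Longrightarrow> t < b \<Longrightarrow> \<exists>L\<le>0. ((\<lambda>h. (g (t+h) - g t)/h) \<longlongrightarrow> L) (at_right 0)"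
  shows "g b \<le> g a"
proof (rule field_le_epsilon)
  fix e :: real assume "e > 0"
  define e' where "e' = e / (b - a + 1)"
  have "e' > 0" using \<open>e > 0\<close> \<open>a \<le> b\<close> by (simp add: e'_def)
  with der have "g b \<le> g a + e' * (b - a)"
    by (intro le_add_if_right_derivative_less[OF assms(1,2)]) (meson le_less_trans)
  also have "e' * (b - a) \<le> e"
    using \<open>e > 0\<close> \<open>a \<le> b\<close> by (simp add: e'_def field_simps)
  finally show "g b \<le> g a + e" by simp
qed

lemma integral_shift_eq_diff:
  fixes f :: "real \<Rightarrow> 'b::banach"
  assumes "continuous_on {0..} f" "k \<ge> 0" "h \<ge> 0"
  shows "integral {0..h} (\<lambda>s. f (s + k)) = integral {0..k+h} f - integral {0..k} f"
proof -
  have int: "f integrable_on {a..b}" if "a \<ge> 0" for a b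
    using that by (intro integrable_continuous_real continuous_on_subset[OF assms(1)]) auto
  have "(f has_integral integral {k..k+h} f) {k..k+h}"
    using assms(2) by (intro integrable_integral int)
  from has_integral_shift_real_ivl[OF this, of k]
  have "integral {0..h} (\<lambda>s. f (s + k)) = integral {k..k+h} f" by (simp add: integral_unique)
  also have "\<dots> = integral {0..k+h} f - integral {0..k} f"
    using Henstock_Kurzweil_Integration.integral_combine[of 0 k "k+h" f] assms(2,3) int[of 0 "k+h"]
    by (simp add: eq_diff_eq add.commute)
  finally show ?thesis .
qed

lemma integral_Icc_tendsto_atLeast:
  fixes f :: "real \<Rightarrow> 'b::euclidean_space"
  assumes f: "f absolutely_integrable_on {a..}"
  shows "((\<lambda>b. integral {a..b} f) \<longlongrightarrow> integral {a..} f) at_top"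
proof -
  have "set_lebesgue_integral lebesgue {a..b} f = integral {a..b} f" for b
    by (rule set_lebesgue_integral_eq_integral(2)[OF set_integrable_subset[OF f]]) auto
  moreover have "((\<lambda>b. set_lebesgue_integral lebesgue {a..b} f) \<longlongrightarrow> set_lebesgue_integral lebesgue {a..} f) at_top"
    by (rule tendsto_set_lebesgue_integral_at_top) (use f in auto)
  ultimately show ?thesis using set_lebesgue_integral_eq_integral(2)[OF f] by simp
qed

section \<open>Sesquilinear and Hermitian forms\<close>

lemma complex_structure_of_real:
  "complex_structure cs \<Longrightarrow> cs (complex_of_real r) x = r *\<^sub>R x"
  unfolding complex_structure_def by blast

lemma sesquilinear_bounded_bilinear:
  fixes B :: "'a::real_normed_vector \<Rightarrow> 'a \<Rightarrow> complex"
  assumes cs: "complex_structure cs"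
    and "\<And>x y z. B (x + y) z = B x z + B y z" "\<And>x y z. B x (y + z) = B x y + B x z"
    and left: "\<And>a x z. B (cs a x) z = a * B x z"
    and right: "\<And>a x z. B x (cs a z) = cnj a * B x z"
    and "\<And>x z. norm (B x z) \<le> K * norm x * norm z"
  shows "bounded_bilinear B"
proof
  show "B (r *\<^sub>R x) z = r *\<^sub>R B x z" "B x (r *\<^sub>R z) = r *\<^sub>R B x z" for r x z
    using left[of "complex_of_real r"] right[of x "complex_of_real r"]
    by (simp_all add: complex_structure_of_real[OF cs] scaleR_conv_of_real)
  show "\<exists>K. \<forall>a b. norm (B a b) \<le> norm a * norm b * K"
    using assms(6) by (metis mult.commute mult.left_commute)
qed (use assms in auto)

lemma bounded_op_dual_bounded_bilinear:
  assumes "complex_structure cs" "bounded_op_dual cs Q"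
  shows "bounded_bilinear Q"
proof -
  obtain K where "\<And>x z. cmod (Q x z) \<le> K * norm x * norm z"
    using assms(2) unfolding bounded_op_dual_def by blast
  with assms show ?thesis
    unfolding bounded_op_dual_def bounded_antilinear_functional_def
    by (intro sesquilinear_bounded_bilinear[of cs _ K]) metis+
qed

locale hermitian_form =
  fixes cs :: "complex \<Rightarrow> 'a::real_normed_vector \<Rightarrow> 'a" and ip :: "'a \<Rightarrow> 'a \<Rightarrow> complex"
  assumes cs: "complex_structure cs"
    and add_left: "\<And>x y z. ip (x + y) z = ip x z + ip y z"
    and scale_left: "\<And>a x z. ip (cs a x) z = a * ip x z"
    and hermitian: "\<And>x y. ip y x = cnj (ip x y)"
begin

lemma cnj_swap: "cnj (ip y x) = ip x y"
  using hermitian[of x y] by simp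

lemma add_right: "ip x (y + z) = ip x y + ip x z"
proof -
  have "ip x (y + z) = cnj (ip (y + z) x)" by (rule hermitian)
  then show ?thesis by (simp only: add_left complex_cnj_add cnj_swap)
qed

lemma scale_right: "ip x (cs a z) = cnj a * ip x z"
proof -
  have "ip x (cs a z) = cnj (ip (cs a z) x)" by (rule hermitian)
  then show ?thesis by (simp only: scale_left complex_cnj_mult cnj_swap)
qed

lemma scaleR_left: "ip (r *\<^sub>R x) z = r *\<^sub>R ip x z"
  using scale_left[of "complex_of_real r"] by (simp add: complex_structure_of_real[OF cs] scaleR_conv_of_real)

lemma scaleR_right: "ip x (r *\<^sub>R z) = r *\<^sub>R ip x z"
  using scale_right[of x "complex_of_real r"] by (simp add: complex_structure_of_real[OF cs] scaleR_conv_of_real)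

lemma Re_polarization: "4 * Re (ip x y) = Re (ip (x + y) (x + y)) - Re (ip (x - y) (x - y))"
proof -
  have "ip (x - y) (x - y) = ip (x + (-1) *\<^sub>R y) (x + (-1) *\<^sub>R y)" by simp
  then have "ip (x - y) (x - y) = ip x x - ip x y - ip y x + ip y y"
    by (simp only: add_left add_right scaleR_left scaleR_right) simp
  moreover have "ip (x + y) (x + y) = ip x x + ip x y + ip y x + ip y y"
    by (simp add: add_left add_right)
  moreover have "Re (ip y x) = Re (ip x y)" using hermitian[of x y] by simp
  ultimately show ?thesis by (simp only: minus_complex.sel plus_complex.sel)
qed

lemma abs_Re_le_if_Re_diag_le:
  assumes nonneg: "\<And>x. Re (ip x x) \<ge> 0" and bound: "\<And>x. Re (ip x x) \<le> C * (norm x)\<^sup>2"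
  shows "\<bar>Re (ip x y)\<bar> \<le> C * norm x * norm y"
proof (cases "x = 0 \<or> y = 0")
  case True
  then show ?thesis using scaleR_left[of 0 x y] scaleR_right[of x 0 y] by auto
next
  case False
  have unit: "\<bar>Re (ip u v)\<bar> \<le> C" if "norm u = 1" "norm v = 1" for u v
  proof -
    have C: "C \<ge> 0" using nonneg[of u] bound[of u] \<open>norm u = 1\<close> by simp
    have "Re (ip w w) \<le> 4 * C" if "norm w \<le> 2" for w
    proof -
      have "(norm w)\<^sup>2 \<le> 2\<^sup>2" using that by (intro power_mono) auto
      then show ?thesis using bound[of w] mult_left_mono[OF _ C] by fastforce
    qed
    moreover have "norm (u + v) \<le> 2" "norm (u - v) \<le> 2"
      using norm_triangle_ineq[of u v] norm_triangle_ineq4[of u v] that by auto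
    ultimately have "Re (ip (u + v) (u + v)) \<le> 4 * C" "Re (ip (u - v) (u - v)) \<le> 4 * C"
      by blast+
    then show ?thesis
      using Re_polarization[of u v] nonneg[of "u + v"] nonneg[of "u - v"] by linarith
  qed
  have "Re (ip ((1 / norm x) *\<^sub>R x) ((1 / norm y) *\<^sub>R y)) = Re (ip x y) / (norm x * norm y)"
    by (simp add: scaleR_left scaleR_right)
  moreover have "\<bar>Re (ip ((1 / norm x) *\<^sub>R x) ((1 / norm y) *\<^sub>R y))\<bar> \<le> C"
    using False by (intro unit) auto
  moreover have "norm x * norm y > 0" using False by simp
  ultimately show ?thesis by (simp add: abs_div divide_le_eq mult.assoc)
qed

lemma norm_le_if_Re_diag_le:
  assumes "\<And>x. Re (ip x x) \<ge> 0" "\<And>x. Re (ip x x) \<le> C * (norm x)\<^sup>2"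
  shows "norm (ip x y) \<le> 2 * C * norm x * norm y"
proof -
  have "norm (cs \<i> y) = norm y" using cs unfolding complex_structure_def by simp
  moreover have "Im (ip x y) = Re (ip x (cs \<i> y))" by (simp add: scale_right)
  ultimately have "\<bar>Im (ip x y)\<bar> \<le> C * norm x * norm y"
    using abs_Re_le_if_Re_diag_le[OF assms, of x "cs \<i> y"] by simp
  then show ?thesis using cmod_le[of "ip x y"] abs_Re_le_if_Re_diag_le[OF assms, of x y] by simp
qed

lemma bounded_bilinear_if_Re_diag_le:
  assumes "\<And>x. Re (ip x x) \<ge> 0" "\<And>x. Re (ip x x) \<le> C * (norm x)\<^sup>2"
  shows "bounded_bilinear ip"
  by (rule sesquilinear_bounded_bilinear[OF cs add_left add_right scale_left scale_right
        norm_le_if_Re_diag_le[OF assms]])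

end

section \<open>Exponentially stable semigroups\<close>

locale exp_stable_semigroup =
  fixes cs :: "complex \<Rightarrow> 'a::banach \<Rightarrow> 'a"
    and T :: "real \<Rightarrow> 'a \<Rightarrow> 'a" and D :: "'a set" and A :: "'a \<Rightarrow> 'a"
    and M \<epsilon> :: real
  assumes cs: "complex_structure cs"
    and semigroup: "C0_semigroup cs T"
    and generator: "generator T D A"
    and M_ge_1: "M \<ge> 1" and eps_pos: "\<epsilon> > 0"
    and onorm_T_le: "\<And>t. t \<ge> 0 \<Longrightarrow> onorm (T t) \<le> M * exp (- \<epsilon> * t)"
begin

lemma T_scale: "t \<ge> 0 \<Longrightarrow> T t (cs a x) = cs a (T t x)"
  using semigroup unfolding C0_semigroup_def bounded_clinear_op_def by blast

lemma bounded_linear_T: assumes "t \<ge> 0" shows "bounded_linear (T t)"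
proof -
  have "bounded_clinear_op cs (T t)" using semigroup assms unfolding C0_semigroup_def by blast
  then obtain K where "\<And>x y. T t (x + y) = T t x + T t y" "\<And>x. norm (T t x) \<le> K * norm x"
    unfolding bounded_clinear_op_def by blast
  then show ?thesis
  proof (intro bounded_linear_intro[where K=K])
    show "T t (r *\<^sub>R x) = r *\<^sub>R T t x" for r x
      using T_scale[OF assms, of "complex_of_real r" x] by (simp add: complex_structure_of_real[OF cs])
  qed (simp_all add: mult.commute)
qed

lemma norm_T_le_exp: assumes "t \<ge> 0" shows "norm (T t x) \<le> M * exp (- \<epsilon> * t) * norm x"
proof -
  have "norm (T t x) \<le> onorm (T t) * norm x" by (rule onorm[OF bounded_linear_T[OF assms]])
  also have "\<dots> \<le> M * exp (- \<epsilon> * t) * norm x"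
    using onorm_T_le[OF assms] by (simp add: mult_right_mono)
  finally show ?thesis .
qed

lemma norm_T_le: assumes "t \<ge> 0" shows "norm (T t x) \<le> M * norm x"
proof -
  have "M * exp (- \<epsilon> * t) * norm x \<le> M * 1 * norm x"
    using M_ge_1 eps_pos assms by (intro mult_right_mono mult_left_mono) auto
  then show ?thesis using norm_T_le_exp[OF assms, of x] by simp
qed

lemma T_0: "T 0 x = x"
  using semigroup unfolding C0_semigroup_def by simp

lemma T_add: "t \<ge> 0 \<Longrightarrow> s \<ge> 0 \<Longrightarrow> T (t + s) x = T t (T s x)"
  using semigroup unfolding C0_semigroup_def by (metis comp_apply)

lemma T_commute: "t \<ge> 0 \<Longrightarrow> s \<ge> 0 \<Longrightarrow> T t (T s x) = T s (T t x)"
  by (metis T_add add.commute)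

lemma T_tendsto_right_0: "((\<lambda>t. T t x) \<longlongrightarrow> x) (at_right 0)"
  using semigroup unfolding C0_semigroup_def by blast

lemma norm_T_diff_le:
  assumes "s \<ge> 0" "t \<ge> 0" "s \<le> t"
  shows "norm (T t x - T s x) \<le> M * norm (T (t - s) x - x)"
proof -
  have "T t x - T s x = T s (T (t - s) x - x)"
    using T_add[of s "t - s" x] assms linear_diff[OF bounded_linear.linear[OF bounded_linear_T[OF assms(1)]]]
    by simp
  then show ?thesis using norm_T_le[OF assms(1)] by simp
qed

lemma continuous_on_orbit: "continuous_on {0..} (\<lambda>t. T t x)"
  unfolding continuous_on_iff
proof (intro ballI allI impI)
  fix t e :: real assume t: "t \<in> {0..}" and e: "e > 0"
  have "eventually (\<lambda>h. dist (T h x) x < e / M) (at_right 0)"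
    using tendstoD[OF T_tendsto_right_0] e M_ge_1 by simp
  then obtain d where "d > 0" and d: "\<And>h. 0 < h \<Longrightarrow> h < d \<Longrightarrow> norm (T h x - x) < e / M"
    unfolding eventually_at_right_field by (auto simp: dist_norm)
  have "dist (T s x) (T t x) < e" if s: "s \<ge> 0" "\<bar>s - t\<bar> < d" for s
  proof (cases "s = t")
    case False
    have "norm (T (max s t) x - T (min s t) x) \<le> M * norm (T (max s t - min s t) x - x)"
      using s t by (intro norm_T_diff_le) auto
    also have "\<dots> < M * (e / M)"
      using False s M_ge_1 by (intro mult_strict_left_mono d) auto
    finally show ?thesis using M_ge_1
      by (cases "s \<le> t") (simp_all add: dist_norm norm_minus_commute max_def min_def)
  qed (use e in simp)
  with \<open>d > 0\<close> show "\<exists>d>0. \<forall>s\<in>{0..}. dist s t < d \<longrightarrow> dist (T s x) (T t x) < e"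
    by (auto simp: dist_real_def)
qed

lemma generator_tendsto: "x \<in> D \<Longrightarrow> ((\<lambda>h. (1/h) *\<^sub>R (T h x - x)) \<longlongrightarrow> A x) (at_right 0)"
  using generator unfolding generator_def by blast

lemma in_D_if_tendsto: "((\<lambda>h. (1/h) *\<^sub>R (T h x - x)) \<longlongrightarrow> y) (at_right 0) \<Longrightarrow> x \<in> D"
  using generator unfolding generator_def by blast

lemma T_in_D: assumes "x \<in> D" "t \<ge> 0" shows "T t x \<in> D"
proof (rule in_D_if_tendsto)
  have "((\<lambda>h. T t ((1/h) *\<^sub>R (T h x - x))) \<longlongrightarrow> T t (A x)) (at_right 0)"
    by (rule bounded_linear.tendsto[OF bounded_linear_T[OF assms(2)] generator_tendsto[OF assms(1)]])
  moreover have "eventually (\<lambda>h. T t ((1/h) *\<^sub>R (T h x - x)) = (1/h) *\<^sub>R (T h (T t x) - T t x)) (at_right 0)"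
    by (rule eventually_mono[OF eventually_at_right_less])
      (use assms(2) bounded_linear_T[OF assms(2)] in \<open>simp add: T_commute linear_simps\<close>)
  ultimately show "((\<lambda>h. (1/h) *\<^sub>R (T h (T t x) - T t x)) \<longlongrightarrow> T t (A x)) (at_right 0)"
    by (simp add: tendsto_cong)
qed

lemma bilinear_orbit_right_quotient:
  assumes "bounded_bilinear B" and "y \<in> D"
  shows "((\<lambda>h. (1/h) *\<^sub>R (B (T h y) (T h y) - B y y)) \<longlongrightarrow> B (A y) y + B y (A y)) (at_right 0)"
proof -
  interpret B: bounded_bilinear B by (rule assms(1))
  have "((\<lambda>h. B ((1/h) *\<^sub>R (T h y - y)) (T h y) + B y ((1/h) *\<^sub>R (T h y - y)))
      \<longlongrightarrow> B (A y) y + B y (A y)) (at_right 0)"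
    by (intro tendsto_add B.tendsto generator_tendsto[OF assms(2)] T_tendsto_right_0 tendsto_const)
  moreover have "B ((1/h) *\<^sub>R (T h y - y)) (T h y) + B y ((1/h) *\<^sub>R (T h y - y))
      = (1/h) *\<^sub>R (B (T h y) (T h y) - B y y)" for h
    by (simp add: B.scaleR_left B.scaleR_right B.diff_left B.diff_right algebra_simps scaleR_diff_right)
  ultimately show ?thesis by simp
qed

lemma T_integral_orbit:
  assumes "k \<ge> 0" "h \<ge> 0"
  shows "T k (integral {0..h} (\<lambda>s. T s x))
    = integral {0..k+h} (\<lambda>s. T s x) - integral {0..k} (\<lambda>s. T s x)"
proof -
  have "(\<lambda>s. T s x) integrable_on {0..h}"
    by (intro integrable_continuous_real continuous_on_subset[OF continuous_on_orbit]) auto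
  then have "T k (integral {0..h} (\<lambda>s. T s x)) = integral {0..h} (T k \<circ> (\<lambda>s. T s x))"
    by (rule integral_linear[symmetric, OF _ bounded_linear_T[OF assms(1)]])
  also have "\<dots> = integral {0..h} (\<lambda>s. T (s + k) x)"
    by (rule integral_cong) (use assms(1) in \<open>auto simp: T_add[symmetric] add.commute\<close>)
  also have "\<dots> = integral {0..k+h} (\<lambda>s. T s x) - integral {0..k} (\<lambda>s. T s x)"
    by (rule integral_shift_eq_diff[OF continuous_on_orbit assms])
  finally show ?thesis .
qed

lemma orbit_mean_in_D:
  assumes "h > 0"
  shows "(1/h) *\<^sub>R integral {0..h} (\<lambda>s. T s x) \<in> D"
proof -
  define F where "F u = integral {0..u} (\<lambda>s. T s x)" for u
  have "((\<lambda>k. (1/h) *\<^sub>R ((1/k) *\<^sub>R (F (h+k) - F h) - (1/k) *\<^sub>R (F (0+k) - F 0)))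
      \<longlongrightarrow> (1/h) *\<^sub>R (T h x - T 0 x)) (at_right 0)"
    unfolding F_def using assms
    by (intro tendsto_scaleR tendsto_const tendsto_diff integral_right_quotient continuous_on_orbit) auto
  moreover have "eventually (\<lambda>k. (1/h) *\<^sub>R ((1/k) *\<^sub>R (F (h+k) - F h) - (1/k) *\<^sub>R (F (0+k) - F 0))
      = (1/k) *\<^sub>R (T k ((1/h) *\<^sub>R F h) - (1/h) *\<^sub>R F h)) (at_right 0)"
  proof (rule eventually_mono[OF eventually_at_right_less])
    fix k :: real assume "k > 0"
    have "T k ((1/h) *\<^sub>R F h) = (1/h) *\<^sub>R (F (k + h) - F k)"
      using T_integral_orbit[of k h] assms \<open>k > 0\<close> bounded_linear_T[of k] by (simp add: F_def linear_simps)
    moreover have "F 0 = 0" by (simp add: F_def)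
    ultimately show "(1/h) *\<^sub>R ((1/k) *\<^sub>R (F (h+k) - F h) - (1/k) *\<^sub>R (F (0+k) - F 0))
        = (1/k) *\<^sub>R (T k ((1/h) *\<^sub>R F h) - (1/h) *\<^sub>R F h)"
      by (simp add: add.commute scaleR_diff_right scaleR_add_right mult.commute diff_diff_eq)
  qed
  ultimately have "((\<lambda>k. (1/k) *\<^sub>R (T k ((1/h) *\<^sub>R F h) - (1/h) *\<^sub>R F h))
      \<longlongrightarrow> (1/h) *\<^sub>R (T h x - x)) (at_right 0)"
    by (simp add: T_0 tendsto_cong)
  then show ?thesis unfolding F_def by (rule in_D_if_tendsto)
qed

lemma closure_D: "closure D = UNIV"
proof -
  have "x \<in> closure D" for x
  proof -
    have lim: "((\<lambda>h. (1/h) *\<^sub>R integral {0..h} (\<lambda>s. T s x)) \<longlongrightarrow> x) (at_right 0)"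
      using integral_right_quotient[OF continuous_on_orbit[of x], of 0] by (simp add: T_0)
    have "eventually (\<lambda>h. (1/h) *\<^sub>R integral {0..h} (\<lambda>s. T s x) \<in> closure D) (at_right 0)"
      by (rule eventually_mono[OF eventually_at_right_less])
        (use orbit_mean_in_D closure_subset in blast)
    from Lim_in_closed_set[OF closed_closure this _ lim] show ?thesis by simp
  qed
  then show ?thesis by blast
qed

end

section \<open>Left invertibility implies strong positivity\<close>

context exp_stable_semigroup
begin

lemma Re_form_orbit_right_quotient:
  assumes "t \<ge> 0"
    and "((\<lambda>h. (1/h) *\<^sub>R (B (T h (T t x)) (T h (T t x)) - B (T t x) (T t x))) \<longlongrightarrow> L) (at_right 0)"
  shows "((\<lambda>h. (Re (B (T (t+h) x) (T (t+h) x)) - Re (B (T t x) (T t x))) / h) \<longlongrightarrow> Re L) (at_right 0)"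
proof -
  have "eventually (\<lambda>h. Re ((1/h) *\<^sub>R (B (T h (T t x)) (T h (T t x)) - B (T t x) (T t x)))
      = (Re (B (T (t+h) x) (T (t+h) x)) - Re (B (T t x) (T t x))) / h) (at_right 0)"
  proof (rule eventually_mono[OF eventually_at_right_less])
    fix h :: real assume "0 < h"
    then have "T (t+h) x = T h (T t x)" using T_add[of h t x] assms(1) by (simp add: add.commute)
    then show "Re ((1/h) *\<^sub>R (B (T h (T t x)) (T h (T t x)) - B (T t x) (T t x)))
        = (Re (B (T (t+h) x) (T (t+h) x)) - Re (B (T t x) (T t x))) / h"
      by (simp add: divide_inverse mult.commute)
  qed
  from Lim_transform_eventually[OF tendsto_Re[OF assms(2)] this] show ?thesis by simp
qed

lemma left_invertible_lower_bound:
  assumes "left_invertible_sg T"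
  obtains c0 where "c0 > 0" "\<And>t x. 0 \<le> t \<Longrightarrow> t \<le> 1 \<Longrightarrow> c0 * (norm x)\<^sup>2 \<le> (norm (T t x))\<^sup>2"
proof -
  obtain m where m: "m 1 > 0" "\<And>x. m 1 * norm x \<le> norm (T 1 x)"
    using assms unfolding left_invertible_sg_def by (meson zero_le_one)
  have "(m 1 / M)\<^sup>2 * (norm x)\<^sup>2 \<le> (norm (T t x))\<^sup>2" if t: "0 \<le> t" "t \<le> 1" for t x
  proof -
    have "m 1 * norm x \<le> norm (T (1 - t) (T t x))" using m(2)[of x] T_add[of "1 - t" t x] t by simp
    also have "\<dots> \<le> M * norm (T t x)" using t by (intro norm_T_le) simp
    finally have "(m 1 / M) * norm x \<le> norm (T t x)" using M_ge_1 by (simp add: field_simps)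
    with m(1) M_ge_1 have "((m 1 / M) * norm x)\<^sup>2 \<le> (norm (T t x))\<^sup>2" by (intro power_mono) auto
    then show ?thesis by (simp add: power_mult_distrib power_divide)
  qed
  moreover have "(m 1 / M)\<^sup>2 > 0" using m(1) M_ge_1 by simp
  ultimately show ?thesis using that by blast
qed

lemma L_set_lower_bound_on_D:
  assumes Q: "Q \<in> L_set cs D A" and x: "x \<in> D"
    and lower: "\<And>t. 0 \<le> t \<Longrightarrow> t \<le> 1 \<Longrightarrow> c0 * (norm x)\<^sup>2 \<le> (norm (T t x))\<^sup>2"
  shows "c0 * (norm x)\<^sup>2 \<le> Re (Q x x)"
proof -
  have "positive_op cs Q" and LA: "\<And>y. y \<in> D \<Longrightarrow> Re (Q (A y) y + Q y (A y)) \<le> - (norm y)\<^sup>2"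
    using Q unfolding L_set_def by auto
  then have B: "bounded_bilinear Q" and nonneg: "\<And>y. Re (Q y y) \<ge> 0"
    using bounded_op_dual_bounded_bilinear[OF cs] unfolding positive_op_def by auto
  define G where "G t = Re (Q (T t x) (T t x)) + c0 * (norm x)\<^sup>2 * t" for t
  have "G 1 \<le> G 0"
  proof (rule le_if_right_derivative_nonpos[where g=G and a=0 and b=1])
    have "continuous_on {0..1} (\<lambda>t. T t x)" by (rule continuous_on_subset[OF continuous_on_orbit]) auto
    then show "continuous_on {0..1} G"
      unfolding G_def by (intro continuous_intros bounded_bilinear.continuous_on[OF B])
  next
    fix t :: real assume t: "0 \<le> t" "t < 1"
    have y: "T t x \<in> D" using T_in_D x t by simp
    have "((\<lambda>h. (G (t+h) - G t)/h)
        \<longlongrightarrow> Re (Q (A (T t x)) (T t x) + Q (T t x) (A (T t x))) + c0 * (norm x)\<^sup>2) (at_right 0)"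
    proof -
      have "((\<lambda>h. (Re (Q (T (t+h) x) (T (t+h) x)) - Re (Q (T t x) (T t x))) / h + c0 * (norm x)\<^sup>2)
          \<longlongrightarrow> Re (Q (A (T t x)) (T t x) + Q (T t x) (A (T t x))) + c0 * (norm x)\<^sup>2) (at_right 0)"
        by (intro tendsto_add tendsto_const Re_form_orbit_right_quotient t
            bilinear_orbit_right_quotient[OF B y])
      moreover have "eventually (\<lambda>h. (Re (Q (T (t+h) x) (T (t+h) x)) - Re (Q (T t x) (T t x))) / h
          + c0 * (norm x)\<^sup>2 = (G (t+h) - G t)/h) (at_right 0)"
        by (rule eventually_mono[OF eventually_at_right_less]) (simp add: G_def field_simps)
      ultimately show ?thesis by (simp add: tendsto_cong)
    qed
    moreover have "Re (Q (A (T t x)) (T t x) + Q (T t x) (A (T t x))) + c0 * (norm x)\<^sup>2 \<le> 0"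
      using LA[OF y] lower[of t] t by simp
    ultimately show "\<exists>L\<le>0. ((\<lambda>h. (G (t+h) - G t)/h) \<longlongrightarrow> L) (at_right 0)" by blast
  qed simp
  then show ?thesis using nonneg[of "T 1 x"] by (simp add: G_def T_0)
qed

lemma left_invertible_imp_strongly_positive:
  assumes "left_invertible_sg T" and Q: "Q \<in> L_set cs D A"
  shows "strongly_positive Q"
proof -
  obtain c0 where c0: "c0 > 0" and lower: "\<And>t x. 0 \<le> t \<Longrightarrow> t \<le> 1 \<Longrightarrow> c0 * (norm x)\<^sup>2 \<le> (norm (T t x))\<^sup>2"
    using left_invertible_lower_bound[OF assms(1)] by blast
  have pos: "positive_op cs Q" using Q unfolding L_set_def by blast
  then have B: "bounded_bilinear Q"
    using bounded_op_dual_bounded_bilinear[OF cs] unfolding positive_op_def by blast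
  have "closed {x. c0 * (norm x)\<^sup>2 \<le> Re (Q x x)}"
    by (intro closed_Collect_le continuous_intros bounded_bilinear.continuous_on[OF B])
  moreover have "D \<subseteq> {x. c0 * (norm x)\<^sup>2 \<le> Re (Q x x)}"
    using L_set_lower_bound_on_D[OF Q _ lower] by blast
  ultimately have "c0 * (norm x)\<^sup>2 \<le> Re (Q x x)" for x
    using closure_minimal[of D] closure_D by blast
  moreover have "Im (Q x x) = 0" for x using pos unfolding positive_op_def by blast
  ultimately show ?thesis using c0 unfolding strongly_positive_def by blast
qed

end

section \<open>The Lyapunov operator\<close>

lemma has_integral_exp_decay:
  fixes K \<epsilon> :: real
  assumes "\<epsilon> > 0"
  shows "((\<lambda>s. K * exp (- \<epsilon> * s)) has_integral K / \<epsilon>) {0..}"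
  using has_integral_mult_right[OF has_integral_exp_minus_to_infinity[OF assms, of 0], of K] by simp

locale hilbertian_exp_stable =
  exp_stable_semigroup cs T D A M \<epsilon> + hermitian_form cs ip
  for cs :: "complex \<Rightarrow> 'a::banach \<Rightarrow> 'a" and T D A M \<epsilon> and ip +
  fixes c C :: real
  assumes c_pos: "c > 0" and C_pos: "C > 0"
    and Im_ip_diag: "\<And>x. Im (ip x x) = 0"
    and Re_ip_diag_ge: "\<And>x. c * (norm x)\<^sup>2 \<le> Re (ip x x)"
    and Re_ip_diag_le: "\<And>x. Re (ip x x) \<le> C * (norm x)\<^sup>2"
begin

lemma Re_ip_diag_nonneg: "Re (ip x x) \<ge> 0"
  using Re_ip_diag_ge[of x] c_pos by (meson order_trans mult_nonneg_nonneg less_imp_le zero_le_power2)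

lemma ip_bounded_bilinear: "bounded_bilinear ip"
  by (rule bounded_bilinear_if_Re_diag_le[OF Re_ip_diag_nonneg Re_ip_diag_le])

definition orbit_ip :: "'a \<Rightarrow> 'a \<Rightarrow> real \<Rightarrow> complex" where
  "orbit_ip x z s = ip (T s x) (T s z)"

lemma continuous_on_orbit_ip: "continuous_on {0..} (orbit_ip x z)"
  unfolding orbit_ip_def by (intro bounded_bilinear.continuous_on[OF ip_bounded_bilinear] continuous_on_orbit)

lemma norm_orbit_ip_le:
  assumes "s \<ge> 0"
  shows "norm (orbit_ip x z s) \<le> 2 * C * M\<^sup>2 * norm x * norm z * exp (- (2 * \<epsilon>) * s)"
proof -
  have "norm (orbit_ip x z s) \<le> 2 * C * norm (T s x) * norm (T s z)"
    unfolding orbit_ip_def by (rule norm_le_if_Re_diag_le[OF Re_ip_diag_nonneg Re_ip_diag_le])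
  also have "\<dots> \<le> 2 * C * (M * exp (- \<epsilon> * s) * norm x) * (M * exp (- \<epsilon> * s) * norm z)"
    using C_pos M_ge_1 norm_T_le_exp[OF assms] by (intro mult_mono mult_left_mono) auto
  also have "\<dots> = 2 * C * M\<^sup>2 * norm x * norm z * exp (- (2 * \<epsilon>) * s)"
    by (simp add: power2_eq_square algebra_simps flip: exp_add)
  finally show ?thesis .
qed

lemma orbit_ip_absolutely_integrable: "orbit_ip x z absolutely_integrable_on {0..}"
proof (rule measurable_bounded_by_integrable_imp_absolutely_integrable)
  show "orbit_ip x z \<in> borel_measurable (lebesgue_on {0..})"
    by (rule continuous_imp_measurable_on_sets_lebesgue[OF continuous_on_orbit_ip]) auto
  show "(\<lambda>s. 2 * C * M\<^sup>2 * norm x * norm z * exp (- (2 * \<epsilon>) * s)) integrable_on {0..}"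
    using has_integral_exp_decay eps_pos by (metis has_integral_integrable mult_pos_pos zero_less_numeral)
qed (use norm_orbit_ip_le in auto)

lemma orbit_ip_integrable: "orbit_ip x z integrable_on {0..}"
  using set_lebesgue_integral_eq_integral(1)[OF orbit_ip_absolutely_integrable] .

definition lyapunov :: "'a \<Rightarrow> 'a \<Rightarrow> complex" where
  "lyapunov x z = integral {0..} (orbit_ip x z)"

lemma norm_lyapunov_le: "norm (lyapunov x z) \<le> C * M\<^sup>2 / \<epsilon> * norm x * norm z"
proof -
  have int: "((\<lambda>s. 2 * C * M\<^sup>2 * norm x * norm z * exp (- (2 * \<epsilon>) * s))
      has_integral 2 * C * M\<^sup>2 * norm x * norm z / (2 * \<epsilon>)) {0..}"
    using eps_pos by (intro has_integral_exp_decay) simp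
  have "norm (lyapunov x z) \<le> integral {0..} (\<lambda>s. 2 * C * M\<^sup>2 * norm x * norm z * exp (- (2 * \<epsilon>) * s))"
    unfolding lyapunov_def using orbit_ip_integrable int norm_orbit_ip_le
    by (intro integral_norm_bound_integral) auto
  also have "\<dots> = 2 * C * M\<^sup>2 * norm x * norm z / (2 * \<epsilon>)" using int by (rule integral_unique)
  finally show ?thesis by simp
qed

lemma lyapunov_add_left: "lyapunov (x + y) z = lyapunov x z + lyapunov y z"
proof -
  have "lyapunov (x + y) z = integral {0..} (\<lambda>s. orbit_ip x z s + orbit_ip y z s)"
    unfolding lyapunov_def orbit_ip_def
    by (rule integral_cong) (simp add: linear_simps bounded_linear_T add_left)
  also have "\<dots> = lyapunov x z + lyapunov y z"
    unfolding lyapunov_def by (rule integral_add[OF orbit_ip_integrable orbit_ip_integrable])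
  finally show ?thesis .
qed

lemma lyapunov_add_right: "lyapunov x (y + z) = lyapunov x y + lyapunov x z"
proof -
  have "lyapunov x (y + z) = integral {0..} (\<lambda>s. orbit_ip x y s + orbit_ip x z s)"
    unfolding lyapunov_def orbit_ip_def
    by (rule integral_cong) (simp add: linear_simps bounded_linear_T add_right)
  also have "\<dots> = lyapunov x y + lyapunov x z"
    unfolding lyapunov_def by (rule integral_add[OF orbit_ip_integrable orbit_ip_integrable])
  finally show ?thesis .
qed

lemma lyapunov_scale_left: "lyapunov (cs a x) z = a * lyapunov x z"
proof -
  have "lyapunov (cs a x) z = integral {0..} (\<lambda>s. a * orbit_ip x z s)"
    unfolding lyapunov_def orbit_ip_def by (rule integral_cong) (simp add: T_scale scale_left)
  then show ?thesis unfolding lyapunov_def by (simp add: integral_mult_right)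
qed

lemma lyapunov_scale_right: "lyapunov x (cs a z) = cnj a * lyapunov x z"
proof -
  have "lyapunov x (cs a z) = integral {0..} (\<lambda>s. cnj a * orbit_ip x z s)"
    unfolding lyapunov_def orbit_ip_def by (rule integral_cong) (simp add: T_scale scale_right)
  then show ?thesis unfolding lyapunov_def by (simp add: integral_mult_right)
qed

lemma lyapunov_bounded_bilinear: "bounded_bilinear lyapunov"
  by (rule sesquilinear_bounded_bilinear[OF cs lyapunov_add_left lyapunov_add_right
        lyapunov_scale_left lyapunov_scale_right norm_lyapunov_le])

lemma Im_lyapunov_diag: "Im (lyapunov x x) = 0"
proof -
  have "Im (lyapunov x x) = integral {0..} (Im \<circ> orbit_ip x x)"
    unfolding lyapunov_def by (rule integral_linear[symmetric, OF orbit_ip_integrable bounded_linear_Im])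
  then show ?thesis by (simp add: o_def orbit_ip_def Im_ip_diag)
qed

lemma Re_lyapunov_diag_nonneg: "Re (lyapunov x x) \<ge> 0"
proof -
  have "Re (lyapunov x x) = integral {0..} (Re \<circ> orbit_ip x x)"
    unfolding lyapunov_def by (rule integral_linear[symmetric, OF orbit_ip_integrable bounded_linear_Re])
  also have "\<dots> \<ge> 0"
    by (intro integral_nonneg integrable_linear[OF orbit_ip_integrable bounded_linear_Re])
      (simp add: orbit_ip_def Re_ip_diag_nonneg)
  finally show ?thesis .
qed

lemma lyapunov_orbit_split:
  assumes "r \<ge> 0"
  shows "lyapunov x x = integral {0..r} (orbit_ip x x) + lyapunov (T r x) (T r x)"
proof -
  have "((\<lambda>b. integral {0..b} (orbit_ip (T r x) (T r x))) \<longlongrightarrow> lyapunov (T r x) (T r x)) at_top"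
    unfolding lyapunov_def by (rule integral_Icc_tendsto_atLeast[OF orbit_ip_absolutely_integrable])
  moreover have "eventually (\<lambda>b. integral {0..b} (orbit_ip (T r x) (T r x))
      = integral {0..r+b} (orbit_ip x x) - integral {0..r} (orbit_ip x x)) at_top"
  proof (rule eventually_mono[OF eventually_ge_at_top[of 0]])
    fix b :: real assume "b \<ge> 0"
    have "integral {0..b} (orbit_ip (T r x) (T r x)) = integral {0..b} (\<lambda>s. orbit_ip x x (s + r))"
      by (rule integral_cong) (use assms in \<open>auto simp: orbit_ip_def T_add\<close>)
    also have "\<dots> = integral {0..r+b} (orbit_ip x x) - integral {0..r} (orbit_ip x x)"
      by (rule integral_shift_eq_diff[OF continuous_on_orbit_ip assms \<open>b \<ge> 0\<close>])
    finally show "integral {0..b} (orbit_ip (T r x) (T r x))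
        = integral {0..r+b} (orbit_ip x x) - integral {0..r} (orbit_ip x x)" .
  qed
  ultimately have "((\<lambda>b. integral {0..r+b} (orbit_ip x x) - integral {0..r} (orbit_ip x x))
      \<longlongrightarrow> lyapunov (T r x) (T r x)) at_top"
    by (rule Lim_transform_eventually)
  moreover have "((\<lambda>b. integral {0..r+b} (orbit_ip x x) - integral {0..r} (orbit_ip x x))
      \<longlongrightarrow> lyapunov x x - integral {0..r} (orbit_ip x x)) at_top"
    unfolding lyapunov_def
    by (intro tendsto_diff tendsto_const
        filterlim_compose[OF integral_Icc_tendsto_atLeast[OF orbit_ip_absolutely_integrable]]
        filterlim_tendsto_add_at_top[OF tendsto_const filterlim_ident])
  ultimately have "lyapunov (T r x) (T r x) = lyapunov x x - integral {0..r} (orbit_ip x x)"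
    by (rule tendsto_unique[OF trivial_limit_at_top_linorder])
  then show ?thesis by simp
qed

lemma lyapunov_orbit_right_quotient:
  "((\<lambda>h. (1/h) *\<^sub>R (lyapunov (T h y) (T h y) - lyapunov y y)) \<longlongrightarrow> - ip y y) (at_right 0)"
proof -
  have "((\<lambda>h. - ((1/h) *\<^sub>R (integral {0..0+h} (orbit_ip y y) - integral {0..0} (orbit_ip y y))))
      \<longlongrightarrow> - orbit_ip y y 0) (at_right 0)"
    by (intro tendsto_minus integral_right_quotient[OF continuous_on_orbit_ip]) simp
  moreover have "eventually (\<lambda>h. - ((1/h) *\<^sub>R (integral {0..0+h} (orbit_ip y y) - integral {0..0} (orbit_ip y y)))
      = (1/h) *\<^sub>R (lyapunov (T h y) (T h y) - lyapunov y y)) (at_right 0)"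
  proof (rule eventually_mono[OF eventually_at_right_less])
    fix h :: real assume "0 < h"
    then have "lyapunov (T h y) (T h y) - lyapunov y y = - integral {0..h} (orbit_ip y y)"
      using lyapunov_orbit_split[of h y] by simp
    then show "- ((1/h) *\<^sub>R (integral {0..0+h} (orbit_ip y y) - integral {0..0} (orbit_ip y y)))
        = (1/h) *\<^sub>R (lyapunov (T h y) (T h y) - lyapunov y y)"
      by simp
  qed
  ultimately show ?thesis by (simp add: tendsto_cong orbit_ip_def T_0)
qed

lemma lyapunov_generator_identity: "x \<in> D \<Longrightarrow> lyapunov (A x) x + lyapunov x (A x) = - ip x x"
  using tendsto_unique[OF trivial_limit_at_right_real
      bilinear_orbit_right_quotient[OF lyapunov_bounded_bilinear] lyapunov_orbit_right_quotient] .

lemma scaled_lyapunov_in_L_set: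
  "(\<lambda>x z. complex_of_real (1/c) * lyapunov x z) \<in> L_set cs D A"
proof -
  define Q where "Q x z = complex_of_real (1/c) * lyapunov x z" for x z
  have bound: "cmod (Q x z) \<le> C * M\<^sup>2 / \<epsilon> / c * norm x * norm z" for x z
  proof -
    have "cmod (Q x z) = cmod (lyapunov x z) / c" using c_pos by (simp add: Q_def norm_divide)
    also have "\<dots> \<le> C * M\<^sup>2 / \<epsilon> * norm x * norm z / c"
      using norm_lyapunov_le c_pos by (intro divide_right_mono) auto
    finally show ?thesis by simp
  qed
  have functional: "bounded_antilinear_functional cs (Q x)" for x
    unfolding bounded_antilinear_functional_def
  proof (intro conjI allI exI)
    show "Q x (y + z) = Q x y + Q x z" for y z by (simp add: Q_def lyapunov_add_right distrib_left)
    show "Q x (cs a z) = cnj a * Q x z" for a z by (simp add: Q_def lyapunov_scale_right)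
    show "cmod (Q x z) \<le> (C * M\<^sup>2 / \<epsilon> / c * norm x) * norm z" for z using bound[of x z] by simp
  qed
  have "bounded_op_dual cs Q"
    unfolding bounded_op_dual_def
  proof (intro conjI allI exI functional)
    show "Q (x + y) = (\<lambda>z. Q x z + Q y z)" for x y
      by (rule ext) (simp add: Q_def lyapunov_add_left distrib_left)
    show "Q (cs a x) = (\<lambda>z. a * Q x z)" for a x
      by (rule ext) (simp add: Q_def lyapunov_scale_left)
    show "cmod (Q x z) \<le> C * M\<^sup>2 / \<epsilon> / c * norm x * norm z" for x z by (rule bound)
  qed
  moreover have "Im (Q x x) = 0" "Re (Q x x) \<ge> 0" for x
    using Im_lyapunov_diag[of x] Re_lyapunov_diag_nonneg[of x] c_pos by (simp_all add: Q_def)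
  moreover have "Im (Q (A x) x + Q x (A x)) = 0" "Re (Q (A x) x + Q x (A x)) \<le> - (norm x)\<^sup>2"
    if "x \<in> D" for x
  proof -
    have "Q (A x) x + Q x (A x) = complex_of_real (1/c) * (lyapunov (A x) x + lyapunov x (A x))"
      unfolding Q_def by (simp only: distrib_left)
    also have "\<dots> = complex_of_real (1/c) * - ip x x"
      by (simp only: lyapunov_generator_identity[OF that])
    finally have eq: "Q (A x) x + Q x (A x) = complex_of_real (1/c) * - ip x x" .
    then show "Im (Q (A x) x + Q x (A x)) = 0" using Im_ip_diag[of x] by simp
    have "(norm x)\<^sup>2 \<le> Re (ip x x) / c" using Re_ip_diag_ge[of x] c_pos by (simp add: le_divide_eq mult.commute)
    with eq show "Re (Q (A x) x + Q x (A x)) \<le> - (norm x)\<^sup>2" by simp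
  qed
  ultimately show ?thesis unfolding L_set_def positive_op_def Q_def by blast
qed

lemma Re_ip_diag_le_lyapunov:
  assumes "\<theta> > 0" and "\<And>y. \<theta> * (norm y)\<^sup>2 \<le> Re (lyapunov y y)"
  shows "Re (ip y y) \<le> C / \<theta> * Re (lyapunov y y)"
proof -
  have "Re (ip y y) \<le> C * (norm y)\<^sup>2" by (rule Re_ip_diag_le)
  also have "\<dots> = C / \<theta> * (\<theta> * (norm y)\<^sup>2)" using assms(1) by simp
  also have "\<dots> \<le> C / \<theta> * Re (lyapunov y y)"
    using assms C_pos by (intro mult_left_mono) auto
  finally show ?thesis .
qed

lemma Re_lyapunov_orbit_growth:
  assumes "\<theta> > 0" and lower: "\<And>y. \<theta> * (norm y)\<^sup>2 \<le> Re (lyapunov y y)" and "R \<ge> 0"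
  shows "Re (lyapunov x x) \<le> Re (lyapunov (T R x) (T R x)) * exp (C / \<theta> * R)"
proof -
  define l where "l = C / \<theta>"
  define h where "h r = Re (lyapunov (T r x) (T r x))" for r
  define G where "G r = - (h r * exp (l * r))" for r
  have "G R \<le> G 0"
  proof (rule le_if_right_derivative_nonpos[where g=G and a=0 and b=R])
    have "continuous_on {0..R} (\<lambda>t. lyapunov (T t x) (T t x))"
      by (intro bounded_bilinear.continuous_on[OF lyapunov_bounded_bilinear]
          continuous_on_subset[OF continuous_on_orbit]) auto
    then show "continuous_on {0..R} G" unfolding G_def h_def by (intro continuous_intros)
  next
    fix r :: real assume r: "0 \<le> r" "r < R"
    define y where "y = T r x"
    have lim: "((\<lambda>k. - ((h (r+k) - h r)/k * exp (l * (r + k)) + h r * ((exp (l * (r + k)) - exp (l * r)) / k)))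
        \<longlongrightarrow> - ((- Re (ip y y)) * exp (l * r) + h r * (l * exp (l * r)))) (at_right 0)"
    proof (intro tendsto_intros exp_right_quotient)
      show "((\<lambda>k. (h (r+k) - h r)/k) \<longlongrightarrow> - Re (ip y y)) (at_right 0)"
        unfolding h_def y_def
        using Re_form_orbit_right_quotient[where B=lyapunov, OF r(1) lyapunov_orbit_right_quotient] by simp
      show "((\<lambda>k. r + k) \<longlongrightarrow> r) (at_right 0)"
        using tendsto_add[OF tendsto_const[of r] tendsto_ident_at[of 0 "{0<..}"]] by simp
    qed
    have quotient_eq: "- ((h (r+k) - h r)/k * exp (l * (r + k)) + h r * ((exp (l * (r + k)) - exp (l * r)) / k))
        = (G (r+k) - G r)/k" for k
      by (cases "k = 0") (simp_all add: G_def field_simps)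
    have "Re (ip y y) \<le> l * h r"
      using Re_ip_diag_le_lyapunov[OF assms(1) lower] by (simp add: h_def y_def l_def)
    then have "- ((- Re (ip y y)) * exp (l * r) + h r * (l * exp (l * r))) \<le> 0"
      by (simp add: algebra_simps mult_right_mono)
    with lim show "\<exists>L\<le>0. ((\<lambda>k. (G (r+k) - G r)/k) \<longlongrightarrow> L) (at_right 0)"
      unfolding quotient_eq by blast
  qed (use \<open>R \<ge> 0\<close> in simp)
  then show ?thesis by (simp add: G_def h_def l_def T_0)
qed

lemma strongly_positive_imp_left_invertible:
  assumes "\<forall>Q\<in>L_set cs D A. strongly_positive Q"
  shows "left_invertible_sg T"
proof -
  obtain \<theta> where "\<theta> > 0" and "\<And>y. \<theta> * (norm y)\<^sup>2 \<le> Re (complex_of_real (1/c) * lyapunov y y)"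
  proof -
    have "strongly_positive (\<lambda>x z. complex_of_real (1/c) * lyapunov x z)"
      using assms scaled_lyapunov_in_L_set by blast
    then show ?thesis using that unfolding strongly_positive_def by auto
  qed
  then have \<theta>: "c * \<theta> > 0" and lower: "\<And>y. c * \<theta> * (norm y)\<^sup>2 \<le> Re (lyapunov y y)"
    using c_pos by (auto simp: field_simps)
  define K where "K = C * M\<^sup>2 / \<epsilon>"
  have K: "K > 0" using C_pos M_ge_1 eps_pos by (simp add: K_def)
  define m where "m R = sqrt (c * \<theta> / (K * exp (C / (c * \<theta>) * R)))" for R
  have "m R * norm x \<le> norm (T R x)" if "R \<ge> 0" for R x
  proof -
    have "c * \<theta> * (norm x)\<^sup>2 \<le> Re (lyapunov (T R x) (T R x)) * exp (C / (c * \<theta>) * R)"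
      using lower[of x] Re_lyapunov_orbit_growth[OF \<theta> lower that, of x] by linarith
    also have "\<dots> \<le> K * (norm (T R x))\<^sup>2 * exp (C / (c * \<theta>) * R)"
    proof (rule mult_right_mono)
      show "Re (lyapunov (T R x) (T R x)) \<le> K * (norm (T R x))\<^sup>2"
        using order_trans[OF complex_Re_le_cmod norm_lyapunov_le]
        by (simp add: K_def power2_eq_square mult.assoc)
    qed simp
    finally have "(m R * norm x)\<^sup>2 \<le> (norm (T R x))\<^sup>2"
      using K \<theta> by (simp add: m_def power_mult_distrib field_simps)
    then show ?thesis by (rule power2_le_imp_le) simp
  qed
  moreover have "m R > 0" for R using K \<theta> by (simp add: m_def)
  ultimately show ?thesis unfolding left_invertible_sg_def by blast
qed

end

theorem theorem4p1:
  fixes cs :: "complex \<Rightarrow> 'a::banach \<Rightarrow> 'a"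
    and T :: "real \<Rightarrow> 'a \<Rightarrow> 'a" and D :: "'a set" and A :: "'a \<Rightarrow> 'a"
  assumes "complex_structure cs"
    and "hilbertian cs"
    and "C0_semigroup cs T"
    and "generator T D A"
    and "unif_exp_stable T"
  shows "left_invertible_sg T \<longleftrightarrow> (\<forall>Q\<in>L_set cs D A. strongly_positive Q)"
proof -
  obtain M \<epsilon> where "M \<ge> 1" "\<epsilon> > 0" "\<And>t. t \<ge> 0 \<Longrightarrow> onorm (T t) \<le> M * exp (- \<epsilon> * t)"
    using assms(5) unfolding unif_exp_stable_def by blast
  then interpret exp_stable_semigroup cs T D A M \<epsilon>
    using assms(1,3,4) by unfold_locales
  obtain ip :: "'a \<Rightarrow> 'a \<Rightarrow> complex" and c C where ip: "hermitian_form cs ip" and "c > 0"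
    and diag: "\<And>x. Im (ip x x) = 0" "\<And>x. c * (norm x)\<^sup>2 \<le> Re (ip x x)"
    and upper: "\<And>x. Re (ip x x) \<le> C * (norm x)\<^sup>2"
    using assms(1,2) unfolding hilbertian_def hermitian_form_def by metis
  have "Re (ip x x) \<le> max C 1 * (norm x)\<^sup>2" for x
    using upper[of x] mult_right_mono[of C "max C 1" "(norm x)\<^sup>2"] by simp
  with ip \<open>c > 0\<close> interpret hilbertian_exp_stable cs T D A M \<epsilon> ip c "max C 1"
    by (intro hilbertian_exp_stable.intro exp_stable_semigroup_axioms hilbertian_exp_stable_axioms.intro)
      (simp_all add: diag)
  show ?thesis
    using left_invertible_imp_strongly_positive strongly_positive_imp_left_invertible by blast
qed

end
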